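(* Let $b > 0$ with $b \neq 1$, let $p > 0$, and let $\epsilon \in (0,1)$. The fast approximate exponentiation algorithm described below, run on base $b$, exponent $p$ and a depth $i = \mathcal{O}\left(\log\left(\frac{|\log b|}{\epsilon}\right)\right)$, outputs a number $r$ satisfying $(1-\epsilon)\, b^p \leq r \leq (1+\epsilon)\, b^p$, i.e. a $(1\pm\epsilon)$-approximation of $b^p$, after performing $\mathcal{O}\left(\log\left(\frac{|\log b|}{\epsilon}\right)\right)$ operations.
   Context: Fast approximate exponentiation algorithm (input: base $b>0$, exponent $p>0$, depth $i\in\mathbb{N}$), using only multiplications, divisions and square roots. Write $p = z + f$ with $z = \lfloor p \rfloor$ and $f = p - \lfloor p\rfloor \in [0,1)$. (1) Compute $b^{z}$ exactly by binary exponentiation: if $z = \sum_{j=0}^{t} 2^{t-j} c_j$ is the binary representation of $z$ ($c_0 = 1$), set $n_0 = 1$, $n_j = 2 n_{j-1} + c_j$, and correspondingly $b^{n_j} = (b^{n_{j-1}})^2 b^{c_j}$. (2) Approximate $b^{f}$ by $b^{f'}$ where $f' = \sum_{j=1}^{i} s_j 2^{-j}$ is a dyadic rational built greedily: $s_1 = 1$, and for $j>1$, $s_j = 1$ if the current partial sum $\sum_{l<j} s_l 2^{-l}$ is less than $f$, $s_j = -1$ if it is greater than $f$, and the process stops if it equals $f$; so $|f - f'| \leq 2^{-i}$. The power $b^{f'}$ is accumulated by computing successive square roots $b^{1/2^j}$ and multiplying (if $s_j=1$) or dividing (if $s_j=-1$) by $b^{1/2^j}$. The output is $r = b^{z}\,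 b^{f'}$. *)

theory Defs
  imports Complex_Main
begin

text \<open>Binary exponentiation (square-and-multiply) of a real base by a natural exponent.
  Returns the value together with the number of arithmetic operations
  (multiplications) performed.\<close>
fun binpow :: "real \<Rightarrow> nat \<Rightarrow> real \<times> nat" where
  "binpow b n =
     (if n = 0 then (1, 0)
      else (let (r, c) = binpow b (n div 2) in
            if n mod 2 = 0 then (r * r, c + 1) else (r * r * b, c + 2)))"

text \<open>Greedy dyadic approximation of b powr f.
  Arguments: base b, target fraction f, remaining steps k, current index j,
  current root rt = b powr (1/2^(j-1)), current partial sum S,
  accumulated value acc, operation counter cnt.
  Each step computes one square root and one multiplication or division.\<close>
fun frac_loop :: "real \<Rightarrow> real \<Rightarrow> nat \<Rightarrow> nat \<Rightarrow> real \<Rightarrow> real \<Rightarrow> real \<Rightarrow> nat \<Rightarrow> real \<times> nat" where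
  "frac_loop b f 0 j rt S acc cnt = (acc, cnt)"
| "frac_loop b f (Suc k) j rt S acc cnt =
     (let rt' = sqrt rt in
      if j = 1 then frac_loop b f k (Suc j) rt' (S + 1 / 2 ^ j) (acc * rt') (cnt + 2)
      else if S < f then frac_loop b f k (Suc j) rt' (S + 1 / 2 ^ j) (acc * rt') (cnt + 2)
      else if S > f then frac_loop b f k (Suc j) rt' (S - 1 / 2 ^ j) (acc / rt') (cnt + 2)
      else (acc, cnt))"

definition fast_exp :: "real \<Rightarrow> real \<Rightarrow> nat \<Rightarrow> real \<times> nat" where
  "fast_exp b p i =
     (let z = nat \<lfloor>p\<rfloor>; f = p - of_int \<lfloor>p\<rfloor>;
          (x, c1) = binpow b z;
          (y, c2) = frac_loop b f i 1 b 0 1 0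
      in (x * y, c1 + c2 + 1))"

text \<open>The complexity measure log(|log b| / eps), made nonnegative (with +1) so
  that O(.) is meaningful also when |log b|/eps is small.\<close>
definition cost_bound :: "real \<Rightarrow> real \<Rightarrow> real" where
  "cost_bound b eps = 1 + max 0 (ln (\<bar>ln b\<bar> / eps))"

end

theory Submission
  imports Defs "HOL-Analysis.Harmonic_Numbers"
begin

(* Binary exponentiation computes b^z exactly with at most 2z multiplications.
   The greedy dyadic loop keeps the invariant acc = b powr S with |S - f| <= 2^-m after m
   steps, so after i steps the output is b powr (p + delta) with |delta| <= 2^-i, i.e.
   b^p times exp(delta ln b).  Choosing i = log2(|ln b| / eps) + O(1) makes
   |delta ln b| <= eps/2, and exp of a number of modulus <= eps/2 lies in [1 - eps, 1 + eps].
   Each loop step costs two operations, so the total count is 2z + 2i + 1. *)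

declare binpow.simps [simp del]

lemma fst_binpow: "fst (binpow b n) = b ^ n"
proof (induction n rule: less_induct)
  case (less n)
  show ?case
  proof (cases "n = 0")
    case False
    have "b ^ n = b ^ (n div 2) * b ^ (n div 2) * b ^ (n mod 2)"
      by (metis div_mult_mod_eq mult.commute mult_2 power_add)
    with False less[of "n div 2"] show ?thesis
      by (subst binpow.simps) (auto simp: mod2_eq_if split: prod.split)
  qed (simp add: binpow.simps)
qed

lemma snd_binpow_le: "snd (binpow b n) \<le> 2 * n"
proof (induction n rule: less_induct)
  case (less n)
  show ?case
  proof (cases "n = 0")
    case False
    then have "2 * (n div 2) + 2 \<le> 2 * n"
      by (cases n) auto
    with False less[of "n div 2"] show ?thesis
      by (subst binpow.simps) (auto split: prod.split)
  qed (simp add: binpow.simps)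
qed

lemma snd_frac_loop_le: "snd (frac_loop b f k j rt S acc cnt) \<le> cnt + 2 * k"
proof (induction k arbitrary: j rt S acc cnt)
  case (Suc k)
  show ?case
    using Suc[of "Suc j" "sqrt rt" "S + 1 / 2 ^ j" "acc * sqrt rt" "cnt + 2"]
          Suc[of "Suc j" "sqrt rt" "S - 1 / 2 ^ j" "acc / sqrt rt" "cnt + 2"]
    by (auto simp: Let_def)
qed simp

(* At index j = m + 1 the loop holds rt = b powr 2^-m.  The first step always adds 1/2, which
   keeps |S - f| <= 1/2 only because S = 0 at that point. *)
lemma frac_loop_approx:
  assumes "0 < b" "0 \<le> f" "f < 1"
    and "rt = b powr (1 / 2 ^ m)" "acc = b powr S" "\<bar>S - f\<bar> \<le> 1 / 2 ^ m" "m = 0 \<longrightarrow> S = 0"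
  shows "\<exists>S'. fst (frac_loop b f k (Suc m) rt S acc cnt) = b powr S' \<and>
    \<bar>S' - f\<bar> \<le> 1 / 2 ^ (m + k)"
  using assms
proof (induction k arbitrary: m rt S acc cnt)
  case (Suc k)
  define h :: real where "h = 1 / 2 ^ Suc m"
  have h: "0 < h" "1 / 2 ^ m = 2 * h"
    by (simp_all add: h_def)
  have root: "sqrt rt = b powr h"
    using Suc.prems by (simp add: h_def powr_half_sqrt_powr [symmetric] mult.commute)
  have continue: "\<exists>S'. fst (frac_loop b f k (Suc (Suc m)) (sqrt rt) S1 acc1 c) = b powr S' \<and>
      \<bar>S' - f\<bar> \<le> 1 / 2 ^ (m + Suc k)"
    if "acc1 = b powr S1" "\<bar>S1 - f\<bar> \<le> h" for S1 acc1 c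
    using Suc.IH [of "sqrt rt" "Suc m" acc1 S1 c] Suc.prems that root by (simp add: h_def)
  have up: "acc * sqrt rt = b powr (S + h)" and down: "acc / sqrt rt = b powr (S - h)"
    using Suc.prems root by (simp_all add: powr_add powr_diff)
  consider "m = 0" | "m \<noteq> 0" "S < f" | "m \<noteq> 0" "f < S" | "m \<noteq> 0" "S = f"
    by linarith
  then show ?case
  proof cases
    case 1
    then have "\<bar>S + h - f\<bar> \<le> h"
      using Suc.prems h_def by auto
    with 1 show ?thesis
      using continue [OF up] by (simp add: Let_def h_def)
  next
    case 2
    then have "\<bar>S + h - f\<bar> \<le> h"
      using Suc.prems(6) h by linarith
    with 2 show ?thesis
      using continue [OF up] by (simp add: Let_def h_def)
  next
    case 3
    then have "\<bar>S - h - f\<bar> \<le> h"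
      using Suc.prems(6) h by linarith
    with 3 show ?thesis
      using continue [OF down] by (simp add: Let_def h_def)
  next
    case 4
    then show ?thesis
      using Suc.prems(5) by (auto simp: Let_def)
  qed
qed auto

lemma fast_exp_eq:
  "fast_exp b p i =
    (fst (binpow b (nat \<lfloor>p\<rfloor>)) * fst (frac_loop b (p - of_int \<lfloor>p\<rfloor>) i 1 b 0 1 0),
     snd (binpow b (nat \<lfloor>p\<rfloor>)) + snd (frac_loop b (p - of_int \<lfloor>p\<rfloor>) i 1 b 0 1 0) + 1)"
  by (simp add: fast_exp_def split: prod.split)

lemma fast_exp_approx:
  assumes "0 < b" "0 \<le> p"
  shows "\<exists>\<delta>. fst (fast_exp b p i) = b powr p * exp \<delta> \<and> \<bar>\<delta>\<bar> \<le> \<bar>ln b\<bar> / 2 ^ i"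
proof -
  define f where "f = p - of_int \<lfloor>p\<rfloor>"
  have f: "0 \<le> f" "f < 1" and p: "p = real (nat \<lfloor>p\<rfloor>) + f"
    using assms(2) by (simp_all add: f_def) linarith+
  obtain S where S: "fst (frac_loop b f i 1 b 0 1 0) = b powr S" "\<bar>S - f\<bar> \<le> 1 / 2 ^ i"
    using frac_loop_approx [of b f b 0 1 0 i 0] assms f by auto
  have "fst (fast_exp b p i) = b ^ nat \<lfloor>p\<rfloor> * b powr S"
    using S(1) by (simp add: fast_exp_eq fst_binpow f_def)
  also have "\<dots> = b powr (real (nat \<lfloor>p\<rfloor>) + f) * b powr (S - f)"
    using assms by (simp add: powr_realpow [symmetric] flip: powr_add)
  also have "\<dots> = b powr p * exp ((S - f) * ln b)"
    using assms p by (simp add: powr_def mult.commute)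
  finally have "fst (fast_exp b p i) = b powr p * exp ((S - f) * ln b)" .
  moreover have "\<bar>(S - f) * ln b\<bar> \<le> \<bar>ln b\<bar> / 2 ^ i"
    using mult_right_mono [OF S(2), of "\<bar>ln b\<bar>"] by (simp add: abs_mult)
  ultimately show ?thesis
    by blast
qed

lemma snd_fast_exp_le: "snd (fast_exp b p i) \<le> 2 * nat \<lfloor>p\<rfloor> + 2 * i + 1"
  using snd_binpow_le [of b "nat \<lfloor>p\<rfloor>"] snd_frac_loop_le [of b "p - of_int \<lfloor>p\<rfloor>" i 1 b 0 1 0]
  by (simp add: fast_exp_eq)

lemma exp_near_zero_bounds:
  fixes x e :: real
  assumes "\<bar>x\<bar> \<le> e / 2" "e \<le> 1"
  shows "1 - e \<le> exp x" "exp x \<le> 1 + e"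
proof -
  show "1 - e \<le> exp x"
    using exp_ge_add_one_self [of x] assms(1) by linarith
  have "exp x \<le> exp \<bar>x\<bar>"
    by simp
  also have "\<dots> \<le> 1 + 2 * \<bar>x\<bar>"
    using assms by (intro real_exp_bound_lemma) auto
  finally show "exp x \<le> 1 + e"
    using assms(1) by linarith
qed

definition depth :: "real \<Rightarrow> real \<Rightarrow> nat" where
  "depth b eps = nat \<lceil>log 2 (\<bar>ln b\<bar> / eps)\<rceil> + 1"

lemma depth_le_cost_bound: "real (depth b eps) \<le> 2 * cost_bound b eps"
proof -
  define x where "x = ln (\<bar>ln b\<bar> / eps)"
  have "log 2 (\<bar>ln b\<bar> / eps) = x / ln 2"
    by (simp add: log_def x_def)
  also have "\<dots> \<le> max 0 x / ln 2"
    by (simp add: divide_right_mono)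
  also have "\<dots> \<le> max 0 x / (2 / 3)"
    using ln2_ge_two_thirds by (intro divide_left_mono) auto
  finally have "log 2 (\<bar>ln b\<bar> / eps) \<le> 3 / 2 * max 0 x"
    by simp
  then have "max 0 (log 2 (\<bar>ln b\<bar> / eps)) \<le> 3 / 2 * max 0 x"
    by simp
  moreover have "real (nat \<lceil>log 2 (\<bar>ln b\<bar> / eps)\<rceil>) \<le> max 0 (log 2 (\<bar>ln b\<bar> / eps)) + 1"
    by linarith
  ultimately have "real (nat \<lceil>log 2 (\<bar>ln b\<bar> / eps)\<rceil>) \<le> 1 + 2 * max 0 x"
    using max.cobounded1 [of 0 x] by linarith
  then show ?thesis
    unfolding depth_def cost_bound_def x_def [symmetric] by simp
qed

lemma depth_error_le:
  assumes "0 < b" "b \<noteq> 1" "0 < eps"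
  shows "\<bar>ln b\<bar> / 2 ^ depth b eps \<le> eps / 2"
proof -
  have "\<bar>ln b\<bar> / eps \<le> 2 ^ nat \<lceil>log 2 (\<bar>ln b\<bar> / eps)\<rceil>"
    by (rule power_of_nat_log_ge) simp
  with assms show ?thesis
    by (simp add: depth_def field_simps)
qed

lemma fast_exp_depth_rel_error:
  assumes "0 < b" "b \<noteq> 1" "0 \<le> p" "0 < eps" "eps \<le> 1"
  shows "(1 - eps) * b powr p \<le> fst (fast_exp b p (depth b eps))"
    and "fst (fast_exp b p (depth b eps)) \<le> (1 + eps) * b powr p"
proof -
  obtain \<delta> where out: "fst (fast_exp b p (depth b eps)) = b powr p * exp \<delta>"
    and "\<bar>\<delta>\<bar> \<le> \<bar>ln b\<bar> / 2 ^ depth b eps"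
    using fast_exp_approx [of b p "depth b eps"] assms by auto
  then have "\<bar>\<delta>\<bar> \<le> eps / 2"
    using depth_error_le [of b eps] assms by linarith
  then show "(1 - eps) * b powr p \<le> fst (fast_exp b p (depth b eps))"
    and "fst (fast_exp b p (depth b eps)) \<le> (1 + eps) * b powr p"
    unfolding out using exp_near_zero_bounds [of \<delta> eps] assms by (simp_all add: mult.commute)
qed

lemma snd_fast_exp_depth_le:
  "real (snd (fast_exp b p (depth b eps))) \<le> (2 * real (nat \<lfloor>p\<rfloor>) + 5) * cost_bound b eps"
proof -
  have "1 \<le> cost_bound b eps"
    by (simp add: cost_bound_def)
  then have "2 * real (nat \<lfloor>p\<rfloor>) \<le> 2 * real (nat \<lfloor>p\<rfloor>) * cost_bound b eps"
    using mult_left_mono [of 1 "cost_bound b eps" "2 * real (nat \<lfloor>p\<rfloor>)"] by simp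
  then show ?thesis
    using snd_fast_exp_le [of b p "depth b eps"] depth_le_cost_bound [of b eps] \<open>1 \<le> _\<close>
    by (simp add: algebra_simps)
qed

theorem theorem2:
  shows "\<exists>(d :: real \<Rightarrow> real \<Rightarrow> nat) (C :: real). C > 0 \<and>
    (\<forall>b eps. 0 < b \<and> b \<noteq> 1 \<and> 0 < eps \<and> eps < 1 \<longrightarrow>
        real (d b eps) \<le> C * cost_bound b eps) \<and>
    (\<forall>b p eps. 0 < b \<and> b \<noteq> 1 \<and> 0 < p \<and> 0 < eps \<and> eps < 1 \<longrightarrow>
        (1 - eps) * b powr p \<le> fst (fast_exp b p (d b eps)) \<and>
        fst (fast_exp b p (d b eps)) \<le> (1 + eps) * b powr p) \<and>
    (\<forall>p > 0. \<exists>C'. \<forall>b eps. 0 < b \<and> b \<noteq> 1 \<and> 0 < eps \<and> eps < 1 \<longrightarrow>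
        real (snd (fast_exp b p (d b eps))) \<le> C' * cost_bound b eps)"
proof (intro exI [of _ depth] exI [of _ "2::real"] conjI)
  show "\<forall>p > 0. \<exists>C'. \<forall>b eps. 0 < b \<and> b \<noteq> 1 \<and> 0 < eps \<and> eps < 1 \<longrightarrow>
      real (snd (fast_exp b p (depth b eps))) \<le> C' * cost_bound b eps"
    using snd_fast_exp_depth_le by blast
qed (use depth_le_cost_bound fast_exp_depth_rel_error in auto)

end
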